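(* Let $n,p$ be positive integers with $n-p-1>0$ and $\gamma\ge0$, and let $\pi_{\mathrm{MSVS2}}(M)=\det(M^\top M)^{-(n-p-1)/2}\prod_{i=1}^p\|M_{\cdot i}\|^{-\gamma}$ on $\mathbb R^{n\times p}$, where $M_{\cdot i}$ is the $i$-th column of $M$. Then at every $M$ with $M^\top M$ nonsingular, $$\Delta\pi_{\mathrm{MSVS2}}(M)=\gamma(\gamma+n-2p)\left(\sum_{i=1}^p\|M_{\cdot i}\|^{-2}\right)\pi_{\mathrm{MSVS2}}(M),$$ where $\Delta=\sum_{a=1}^n\sum_{i=1}^p\partial^2/\partial M_{ai}^2$. *)

theory Defs
  imports "HOL-Analysis.Analysis"
begin

text \<open>Matrices in R^(n x p) are rendered as real^'p^'n (rows indexed by 'n,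
columns by 'p); n = CARD('n), p = CARD('p).\<close>

definition entry_dir :: "'n::finite \<Rightarrow> 'p::finite \<Rightarrow> real^'p^'n" where
  "entry_dir a i = (\<chi> b j. if b = a \<and> j = i then 1 else 0)"

definition second_partial ::
  "(real^'p::finite^'n::finite \<Rightarrow> real) \<Rightarrow> real^'p^'n \<Rightarrow> 'n \<Rightarrow> 'p \<Rightarrow> real" where
  "second_partial f M a i = deriv (deriv (\<lambda>t. f (M + t *\<^sub>R entry_dir a i))) 0"

definition laplacian ::
  "(real^'p::finite^'n::finite \<Rightarrow> real) \<Rightarrow> real^'p^'n \<Rightarrow> real" where
  "laplacian f M = (\<Sum>a\<in>UNIV. \<Sum>i\<in>UNIV. second_partial f M a i)"

definition pi_MSVS2 :: "real \<Rightarrow> real^'p::finite^'n::finite \<Rightarrow> real" where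
  "pi_MSVS2 \<gamma> M =
     det (transpose M ** M) powr (- (real CARD('n) - real CARD('p) - 1) / 2)
     * (\<Prod>i\<in>UNIV. norm (column i M) powr (- \<gamma>))"

end

theory Submission
  imports Defs
begin

(* Moving one entry, M + t E_ai, changes the Gram matrix M^T M by a symmetric rank-two
   update whose determinant is det (M^T M) times a quadratic in t (two rank-one
   determinant identities), and changes only the i-th column norm, again quadratically.
   So along every coordinate line the density is K Q(t)^e S(t)^(-gamma/2) with explicit
   quadratics Q, S, and its second derivative at 0 is explicit. Summing over the rows
   with C = M (M^T M)^-1, the identities  sum_a C_ai^2 = ((M^T M)^-1)_ii,
   sum_a C_ai M_ai = 1  and  trace (C M^T) = p  give, for any exponent e,
     Laplacian = (2e (2e + n - p - 1) trace (M^T M)^-1 + gamma (gamma + 2 - n - 4e)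
                  sum_i |M_i|^-2) * density,
   and e = -(n - p - 1)/2 is exactly the exponent that kills the trace term. *)

lemma matrix_add_rdistrib: "(A + B) ** C = A ** C + B ** (C :: real^'k::finite^'m::finite)"
  by (simp add: vec_eq_iff matrix_matrix_mult_def algebra_simps sum.distrib)

lemma transpose_add: "transpose (A + B) = transpose A + transpose (B :: real^'m::finite^'n::finite)"
  by (simp add: vec_eq_iff transpose_def)

lemma transpose_matrix_mul_nth:
  "(transpose X ** Y) $ i $ j = (\<Sum>a\<in>UNIV. X$a$i * Y$a$j)"
  by (simp add: matrix_matrix_mult_def transpose_def)

lemma invertible_matrix_inv:
  assumes "invertible A"
  shows "A ** matrix_inv A = mat 1" and "matrix_inv A ** A = mat 1"
  using someI_ex[OF assms[unfolded invertible_def]] by (simp_all add: matrix_inv_def)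

lemma transpose_inverse_of_symmetric:
  fixes A B :: "real^'p::finite^'p"
  assumes "A ** B = mat 1" "B ** A = mat 1" "transpose A = A"
  shows "transpose B = B"
proof -
  have left_inverse: "transpose B ** A = mat 1"
    by (metis assms(1,3) matrix_transpose_mul transpose_mat)
  have "transpose B = transpose B ** (A ** B)"
    by (simp add: assms(1))
  also have "\<dots> = B"
    by (simp add: matrix_mul_assoc left_inverse)
  finally show ?thesis .
qed

definition outer :: "real^'n::finite \<Rightarrow> real^'m::finite \<Rightarrow> real^'m^'n" where
  "outer u v = (\<chi> j k. u$j * v$k)"

lemma outer_nth [simp]: "outer u v $ j $ k = u$j * v$k"
  by (simp add: outer_def)

lemma outer_add_left: "outer (u + v) w = outer u w + outer v w"
  by (simp add: vec_eq_iff algebra_simps)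

lemma outer_scaleR_left: "outer (c *\<^sub>R u) v = c *\<^sub>R outer u v"
  by (simp add: vec_eq_iff)

lemma outer_scaleR_right: "outer u (c *\<^sub>R v) = c *\<^sub>R outer u v"
  by (simp add: vec_eq_iff)

lemma transpose_outer [simp]: "transpose (outer u v) = outer v u"
  by (simp add: vec_eq_iff transpose_def)

lemma outer_matrix_mul: "outer u v ** X = outer u (transpose X *v v)"
  by (simp add: vec_eq_iff matrix_matrix_mult_def matrix_vector_mult_def transpose_def
      sum_distrib_left mult_ac)

lemma matrix_mul_outer: "X ** outer u v = outer (X *v u) v"
  by (simp add: vec_eq_iff matrix_matrix_mult_def matrix_vector_mult_def
      sum_distrib_left sum_distrib_right mult_ac)

lemma outer_mul_outer: "outer u v ** outer w z = (v \<bullet> w) *\<^sub>R outer u z"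
  by (simp add: vec_eq_iff matrix_matrix_mult_def inner_vec_def sum_distrib_left
      sum_distrib_right mult_ac)

lemma outer_mult_vec: "outer u v *v w = (v \<bullet> w) *\<^sub>R u"
  by (simp add: vec_eq_iff matrix_vector_mult_def inner_vec_def sum_distrib_left mult_ac)

lemma entry_dir_eq_outer: "entry_dir a i = outer (axis a 1) (axis i 1)"
  by (simp add: vec_eq_iff entry_dir_def axis_def)

lemma det_mat1_add_outer_axis_right:
  "det (mat 1 + outer y (axis i 1) :: real^'n::finite^'n) = 1 + y$i"
proof -
  have "mat 1 + outer y (axis i 1) =
      (\<chi> j k. if k = i then (mat 1 *v (axis i 1 + y))$j else (mat 1 :: real^'n^'n)$j$k)"
    by (simp only: matrix_vector_mul_lid) (simp add: vec_eq_iff mat_def axis_def)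
  also have "det \<dots> = (axis i 1 + y)$i * det (mat 1 :: real^'n^'n)"
    by (rule cramer_lemma)
  finally show ?thesis
    by simp
qed

lemma det_mat1_add_outer_axis_left:
  "det (mat 1 + outer (axis i 1) w :: real^'n::finite^'n) = 1 + w$i"
  using det_mat1_add_outer_axis_right[of w i] det_transpose[of "mat 1 + outer (axis i 1) w"]
  by (simp add: transpose_add)

lemma det_symmetric_rank_two_update:
  fixes A B :: "real^'p::finite^'p" and m :: "real^'p"
  assumes AB: "A ** B = mat 1" and BA: "B ** A = mat 1" and sym: "transpose A = A"
    and nz: "1 + (B *v m)$i \<noteq> 0"
  shows "det (A + outer (axis i 1) m + outer m (axis i 1) + s *\<^sub>R outer (axis i 1) (axis i 1))
       = det A * ((1 + (B *v m)$i)^2 + (s - m \<bullet> (B *v m)) * B$i$i)"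
proof -
  \<comment> \<open>Factor the update as \<open>L A R\<close> with \<open>L\<close>, \<open>R\<close> identity plus rank one;
    \<open>r\<close> is what makes \<open>(L A) y = m + s e\<close>.\<close>
  define e :: "real^'p" where "e = axis i 1"
  define c where "c = (B *v m)$i"
  define d where "d = m \<bullet> (B *v m)"
  define r where "r = (s - d) / (1 + c)"
  define y where "y = B *v (m + r *\<^sub>R e)"
  define L where "L = mat 1 + outer e (B *v m)"
  define R where "R = mat 1 + outer y e"
  have B_sym: "transpose B = B"
    using AB BA sym by (rule transpose_inverse_of_symmetric)
  have A_B: "A *v (B *v v) = v" for v
    by (simp add: matrix_vector_mul_assoc AB)
  have m_Be: "m \<bullet> (B *v e) = c"
    using B_sym by (simp add: c_def e_def inner_vec_def matrix_vector_mult_def transpose_def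
        vec_eq_iff axis_def if_distrib mult.commute cong: if_cong)
  have LA: "L ** A = A + outer e m"
    by (simp add: L_def matrix_add_rdistrib outer_matrix_mul sym A_B del: transpose_matrix_vector)
  have "(L ** A) *v y = m + (r * (1 + c) + d) *\<^sub>R e"
    by (simp add: LA y_def A_B outer_mult_vec matrix_vector_mult_add_rdistrib
        matrix_vector_right_distrib matrix_vector_mult_scaleR inner_add_right m_Be d_def algebra_simps)
  also have "r * (1 + c) + d = s"
    using nz by (simp add: r_def c_def)
  finally have LAy: "(L ** A) *v y = m + s *\<^sub>R e" .
  have "L ** A ** R = L ** A + outer ((L ** A) *v y) e"
    by (simp add: R_def matrix_add_ldistrib matrix_mul_outer)
  also have "\<dots> = A + outer e m + outer m e + s *\<^sub>R outer e e"
    unfolding LAy unfolding LA by (simp add: outer_add_left outer_scaleR_left add.assoc)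
  finally have "det (A + outer e m + outer m e + s *\<^sub>R outer e e) = det L * det A * det R"
    by (metis det_mul)
  also have "det L = 1 + c"
    by (simp add: L_def e_def c_def det_mat1_add_outer_axis_left)
  also have "det R = 1 + y$i"
    by (simp add: R_def e_def det_mat1_add_outer_axis_right)
  also have "y$i = c + r * B$i$i"
    by (simp add: y_def c_def e_def matrix_vector_right_distrib matrix_vector_mult_scaleR)
      (simp add: matrix_vector_mult_def axis_def if_distrib cong: if_cong)
  also have "(1 + c) * det A * (1 + (c + r * B$i$i)) = det A * ((1 + c)^2 + (s - d) * B$i$i)"
    using nz by (simp add: r_def c_def field_simps power2_eq_square)
  finally show ?thesis
    by (simp add: e_def c_def d_def)
qed

lemma gram_add_entry_dir:
  fixes M :: "real^'p::finite^'n::finite"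
  shows "transpose (M + t *\<^sub>R entry_dir a i) ** (M + t *\<^sub>R entry_dir a i)
    = transpose M ** M + outer (axis i 1) (t *\<^sub>R M$a) + outer (t *\<^sub>R M$a) (axis i 1)
      + t^2 *\<^sub>R outer (axis i 1) (axis i 1)"
proof -
  have row: "transpose M *v axis a 1 = M$a"
    by (simp add: vec_eq_iff matrix_vector_mult_def transpose_def axis_def if_distrib cong: if_cong)
  show ?thesis
    unfolding entry_dir_eq_outer
    by (simp add: transpose_add transpose_scalar matrix_add_ldistrib matrix_add_rdistrib
        matrix_scalar_ac scalar_matrix_assoc[symmetric] outer_matrix_mul matrix_mul_outer
        outer_mul_outer row scaleR_matrix_vector_assoc[symmetric] outer_mult_vec outer_add_left
        outer_scaleR_left outer_scaleR_right power2_eq_square algebra_simps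
        del: transpose_matrix_vector)
qed

lemma gram_invertible_imp_injective:
  fixes M :: "real^'p::finite^'n::finite"
  assumes "invertible (transpose M ** M)" and "M *v x = 0"
  shows "x = 0"
proof -
  have "(transpose M ** M) *v x = 0"
    by (simp add: matrix_vector_mul_assoc[symmetric] assms(2) del: transpose_matrix_vector)
  then show ?thesis
    using inj_matrix_vector_mult[OF assms(1)] by (metis injD matrix_vector_mult_0_right)
qed

lemma column_ne_0_if_gram_invertible:
  fixes M :: "real^'p::finite^'n::finite"
  assumes "invertible (transpose M ** M)"
  shows "column j M \<noteq> 0"
proof -
  have "M *v axis j 1 = column j M"
    by (simp add: vec_eq_iff column_def matrix_vector_mult_def axis_def if_distrib cong: if_cong)
  then show ?thesis
    using gram_invertible_imp_injective[OF assms, of "axis j 1"] by (auto simp: axis_eq_0_iff)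
qed

lemma deriv2_powr_quadratics:
  fixes K u v q0 q1 q2 s0 s1 s2 :: real
  assumes q0: "q0 > 0" and s0: "s0 > 0"
    and f: "\<forall>\<^sub>F t in nhds 0.
      f t = K * (q0 + q1 * t + q2 * t^2) powr u * (s0 + s1 * t + s2 * t^2) powr v"
  shows "deriv (deriv f) 0 = K * q0 powr u * s0 powr v *
    (u * (u-1) * (q1/q0)^2 + 2 * u * q2/q0 + 2 * u * v * (q1/q0) * (s1/s0)
      + v * (v-1) * (s1/s0)^2 + 2 * v * s2/s0)"
proof -
  define Q where "Q t = q0 + q1 * t + q2 * t^2" for t
  define S where "S t = s0 + s1 * t + s2 * t^2" for t
  define g' where "g' t = K * (u * Q t powr (u-1) * (q1 + 2 * q2 * t) * S t powr v
      + Q t powr u * (v * S t powr (v-1) * (s1 + 2 * s2 * t)))" for t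
  have U: "open {t. Q t > 0 \<and> S t > 0}"
    unfolding Q_def S_def by (intro open_Collect_conj open_Collect_less continuous_intros)
  have "\<forall>\<^sub>F t in nhds 0. Q t > 0 \<and> S t > 0"
    using eventually_nhds_in_open[OF U, of 0] q0 s0 by (simp add: Q_def S_def)
  then have "\<forall>\<^sub>F t in nhds 0. deriv (\<lambda>t. K * Q t powr u * S t powr v) t = g' t"
    by eventually_elim
      (auto intro!: DERIV_imp_deriv derivative_eq_intros simp: Q_def S_def g'_def algebra_simps)
  then have "deriv (deriv (\<lambda>t. K * Q t powr u * S t powr v)) 0 = deriv g' 0"
    by (rule deriv_cong_ev) simp
  moreover have "deriv (deriv f) 0 = deriv (deriv (\<lambda>t. K * Q t powr u * S t powr v)) 0"
    using higher_deriv_cong_ev[of f _ 0 0 2] f by (simp add: Q_def S_def numeral_2_eq_2)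
  moreover have "(g' has_real_derivative K * q0 powr u * s0 powr v *
      (u * (u-1) * (q1/q0)^2 + 2 * u * q2/q0 + 2 * u * v * (q1/q0) * (s1/s0)
        + v * (v-1) * (s1/s0)^2 + 2 * v * s2/s0)) (at 0)"
  proof -
    have q: "q0 powr (u - 1) = q0 powr u / q0" "q0 powr (u - 2) = q0 powr u / q0^2"
      using q0 by (simp_all add: powr_diff power2_eq_square)
    have s: "s0 powr (v - 1) = s0 powr v / s0" "s0 powr (v - 2) = s0 powr v / s0^2"
      using s0 by (simp_all add: powr_diff power2_eq_square)
    show ?thesis
      unfolding g'_def Q_def S_def
      by (rule derivative_eq_intros refl | simp add: q0 s0)+
        (simp add: q s field_simps power2_eq_square)
  qed
  ultimately show ?thesis
    by (simp add: DERIV_imp_deriv)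
qed

definition gram_density :: "real \<Rightarrow> real \<Rightarrow> real^'p::finite^'n::finite \<Rightarrow> real" where
  "gram_density e \<gamma> M =
     det (transpose M ** M) powr e * (\<Prod>i\<in>UNIV. norm (column i M) powr (- \<gamma>))"

lemma column_add_entry_dir:
  "column j (M + t *\<^sub>R entry_dir a i) =
     (if j = i then column j M + t *\<^sub>R axis a 1 else column j M)"
  by (simp add: vec_eq_iff column_def entry_dir_def axis_def)

lemma norm_powr_eq_norm_square_powr: "norm x powr r = (norm x ^ 2) powr (r / 2)"
  by (simp add: powr_powr flip: powr_numeral)

lemma second_partial_gram_density:
  fixes M :: "real^'p::finite^'n::finite" and a :: 'n and i :: 'p
  assumes inv: "invertible (transpose M ** M)"
  defines "B \<equiv> matrix_inv (transpose M ** M)"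
  defines "c \<equiv> (M ** B) $ a $ i" and "h \<equiv> (M ** B ** transpose M) $ a $ a"
    and "x \<equiv> M $ a $ i" and "N \<equiv> norm (column i M) ^ 2"
  shows "second_partial (gram_density e \<gamma>) M a i = gram_density e \<gamma> M *
    (4 * e * (e - 1) * c^2 + 2 * e * (c^2 + (1 - h) * B$i$i)
      - 4 * e * \<gamma> * c * x / N + \<gamma> * (\<gamma> + 2) * x^2 / N^2 - \<gamma> / N)"
proof -
  define A where "A = transpose M ** M"
  define m where "m = M $ a"
  define K where "K = det A powr e * (\<Prod>j\<in>UNIV - {i}. norm (column j M) powr (- \<gamma>))"
  define q2 where "q2 = c^2 + (1 - h) * B$i$i"
  have AB: "A ** B = mat 1" and BA: "B ** A = mat 1"
    using invertible_matrix_inv[OF inv] by (simp_all add: A_def B_def)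
  have A_sym: "transpose A = A"
    by (simp add: A_def matrix_transpose_mul)
  have B_sym: "transpose B = B"
    using AB BA A_sym by (rule transpose_inverse_of_symmetric)
  have c: "(B *v m) $ i = c"
    using B_sym unfolding c_def m_def
    by (simp add: matrix_matrix_mult_def matrix_vector_mult_def transpose_def vec_eq_iff mult.commute)
  have h: "m \<bullet> (B *v m) = h"
    by (simp add: h_def m_def inner_vec_def matrix_matrix_mult_def matrix_vector_mult_def
        transpose_def sum_distrib_left sum_distrib_right mult_ac)
      (subst sum.swap, simp add: mult_ac)
  have N_pos: "N > 0"
    using column_ne_0_if_gram_invertible[OF inv] by (simp add: N_def)
  have col_i: "norm (column i M + t *\<^sub>R axis a 1) ^ 2 = N + 2 * x * t + t^2" for t
    unfolding N_def x_def power2_norm_eq_inner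
    by (simp add: inner_add_left inner_add_right inner_commute[of "axis a 1"] inner_axis
        column_def power2_eq_square algebra_simps)
  have U: "open {t. 1 + t * c \<noteq> 0}"
    by (intro open_Collect_neq continuous_intros)
  have near_0: "\<forall>\<^sub>F t in nhds 0. 1 + t * c \<noteq> 0"
    using eventually_nhds_in_open[OF U, of 0] by simp
  have "\<forall>\<^sub>F t in nhds 0. gram_density e \<gamma> (M + t *\<^sub>R entry_dir a i)
      = K * (1 + 2 * c * t + q2 * t^2) powr e * (N + 2 * x * t + 1 * t^2) powr (- \<gamma> / 2)"
    using near_0
  proof eventually_elim
    case (elim t)
    have "transpose (M + t *\<^sub>R entry_dir a i) ** (M + t *\<^sub>R entry_dir a i)
        = A + outer (axis i 1) (t *\<^sub>R m) + outer (t *\<^sub>R m) (axis i 1)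
          + t^2 *\<^sub>R outer (axis i 1) (axis i 1)"
      by (simp add: gram_add_entry_dir A_def m_def)
    also have "det \<dots> = det A * ((1 + t * c)^2 + (t^2 - t^2 * h) * B$i$i)"
      using elim
        det_symmetric_rank_two_update[OF AB BA A_sym, where i = i and m = "t *\<^sub>R m" and s = "t^2"]
      by (simp add: matrix_vector_mult_scaleR c h power2_eq_square)
    also have "\<dots> = det A * (1 + 2 * c * t + q2 * t^2)"
      by (simp add: q2_def power2_eq_square algebra_simps)
    finally have "det (transpose (M + t *\<^sub>R entry_dir a i) ** (M + t *\<^sub>R entry_dir a i)) powr e
        = det A powr e * (1 + 2 * c * t + q2 * t^2) powr e"
      \<comment> \<open>no sign condition on \<open>det A\<close>: \<open>ln\<close> is totalised through \<open>\<bar>x\<bar>\<close>,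
        so \<open>powr_mult\<close> holds for all reals\<close>
      by (simp add: powr_mult)
    moreover have "(\<Prod>j\<in>UNIV. norm (column j (M + t *\<^sub>R entry_dir a i)) powr (- \<gamma>))
        = (N + 2 * x * t + t^2) powr (- \<gamma> / 2)
          * (\<Prod>j\<in>UNIV - {i}. norm (column j M) powr (- \<gamma>))"
      by (simp add: prod.remove[of UNIV i] column_add_entry_dir col_i
          norm_powr_eq_norm_square_powr[of _ "- \<gamma>"])
    ultimately show ?case
      by (simp add: gram_density_def K_def mult_ac)
  qed
  then have "second_partial (gram_density e \<gamma>) M a i = K * 1 powr e * N powr (- \<gamma> / 2) *
      (e * (e - 1) * (2 * c / 1)^2 + 2 * e * q2 / 1
        + 2 * e * (- \<gamma> / 2) * (2 * c / 1) * (2 * x / N)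
        + (- \<gamma> / 2) * (- \<gamma> / 2 - 1) * (2 * x / N)^2 + 2 * (- \<gamma> / 2) * 1 / N)"
    unfolding second_partial_def using N_pos by (intro deriv2_powr_quadratics) simp_all
  moreover have "gram_density e \<gamma> M = K * N powr (- \<gamma> / 2)"
    by (simp add: gram_density_def K_def A_def N_def prod.remove[of UNIV i]
        norm_powr_eq_norm_square_powr[of _ "- \<gamma>"] mult_ac)
  ultimately show ?thesis
    using N_pos by (simp add: q2_def field_simps power2_eq_square)
qed

lemma sum_second_partial_gram_density:
  fixes M :: "real^'p::finite^'n::finite" and i :: 'p
  assumes inv: "invertible (transpose M ** M)"
  defines "B \<equiv> matrix_inv (transpose M ** M)"
  shows "(\<Sum>a\<in>UNIV. second_partial (gram_density e \<gamma>) M a i) = gram_density e \<gamma> M *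
    (2 * e * (2 * e + real CARD('n) - real CARD('p) - 1) * B$i$i
      + \<gamma> * (\<gamma> + 2 - real CARD('n) - 4 * e) / norm (column i M) ^ 2)"
proof -
  define A where "A = transpose M ** M"
  define C where "C = M ** B"
  define H where "H = C ** transpose M"
  define N where "N = norm (column i M) ^ 2"
  have AB: "A ** B = mat 1" and BA: "B ** A = mat 1"
    using invertible_matrix_inv[OF inv] by (simp_all add: A_def B_def)
  have B_sym: "transpose B = B"
    using AB BA by (rule transpose_inverse_of_symmetric) (simp add: A_def matrix_transpose_mul)
  have "transpose C ** C = B ** A ** B"
    by (simp add: C_def A_def B_sym matrix_transpose_mul matrix_mul_assoc)
  then have sum_C2: "(\<Sum>a\<in>UNIV. (C$a$i)^2) = B$i$i"
    using transpose_matrix_mul_nth[of C C i i] by (simp add: BA power2_eq_square)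
  have "transpose C ** M = B ** A"
    by (simp add: C_def A_def B_sym matrix_transpose_mul matrix_mul_assoc)
  then have sum_CM: "(\<Sum>a\<in>UNIV. C$a$i * M$a$i) = 1"
    using transpose_matrix_mul_nth[of C M i i] by (simp add: BA mat_def)
  have "trace H = trace (A ** B)"
    by (metis A_def C_def H_def matrix_mul_assoc trace_mul_sym)
  then have sum_H: "(\<Sum>a\<in>UNIV. H$a$a) = real CARD('p)"
    unfolding AB trace_I by (simp add: trace_def)
  have sum_M2: "(\<Sum>a\<in>UNIV. (M$a$i)^2) = N"
    unfolding N_def power2_norm_eq_inner by (simp add: inner_vec_def column_def power2_eq_square)
  have N_pos: "N > 0"
    using column_ne_0_if_gram_invertible[OF inv] by (simp add: N_def)
  have "(\<Sum>a\<in>UNIV. second_partial (gram_density e \<gamma>) M a i) = gram_density e \<gamma> M *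
    ((4 * e * (e - 1) + 2 * e) * (\<Sum>a\<in>UNIV. (C$a$i)^2)
      + 2 * e * B$i$i * (real CARD('n) - (\<Sum>a\<in>UNIV. H$a$a))
      - 4 * e * \<gamma> / N * (\<Sum>a\<in>UNIV. C$a$i * M$a$i)
      + \<gamma> * (\<gamma> + 2) / N^2 * (\<Sum>a\<in>UNIV. (M$a$i)^2)
      - real CARD('n) * \<gamma> / N)"
    unfolding second_partial_gram_density[OF inv] B_def[symmetric] C_def[symmetric] H_def[symmetric]
      N_def[symmetric]
    by (simp add: sum_distrib_left sum_distrib_right sum_divide_distrib add_divide_distrib
        sum.distrib sum_subtractf algebra_simps)
  also have "\<dots> = gram_density e \<gamma> M *
    (2 * e * (2 * e + real CARD('n) - real CARD('p) - 1) * B$i$i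
      + \<gamma> * (\<gamma> + 2 - real CARD('n) - 4 * e) / N)"
    unfolding sum_C2 sum_CM sum_H sum_M2 using N_pos by (simp add: field_simps power2_eq_square)
  finally show ?thesis
    by (simp add: N_def)
qed

lemma laplacian_gram_density:
  fixes M :: "real^'p::finite^'n::finite"
  assumes inv: "invertible (transpose M ** M)"
  shows "laplacian (gram_density e \<gamma>) M = gram_density e \<gamma> M *
    (2 * e * (2 * e + real CARD('n) - real CARD('p) - 1) * trace (matrix_inv (transpose M ** M))
      + \<gamma> * (\<gamma> + 2 - real CARD('n) - 4 * e) * (\<Sum>i\<in>UNIV. norm (column i M) powr (-2)))"
proof -
  define g where "g = gram_density e \<gamma> M"
  define B where "B = matrix_inv (transpose M ** M)"
  have "laplacian (gram_density e \<gamma>) M = (\<Sum>i\<in>UNIV. g *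
      (2 * e * (2 * e + real CARD('n) - real CARD('p) - 1) * B$i$i
        + \<gamma> * (\<gamma> + 2 - real CARD('n) - 4 * e) / norm (column i M) ^ 2))"
    unfolding laplacian_def sum.swap[of _ UNIV UNIV] sum_second_partial_gram_density[OF inv]
    by (simp add: g_def B_def)
  also have "\<dots> = g * (\<Sum>i\<in>UNIV. 2 * e * (2 * e + real CARD('n) - real CARD('p) - 1) * B$i$i
        + \<gamma> * (\<gamma> + 2 - real CARD('n) - 4 * e) * norm (column i M) powr (-2))"
    using column_ne_0_if_gram_invertible[OF inv]
    by (simp add: sum_distrib_left powr_minus divide_inverse)
  also have "\<dots> = g * (2 * e * (2 * e + real CARD('n) - real CARD('p) - 1) * trace B
        + \<gamma> * (\<gamma> + 2 - real CARD('n) - 4 * e) * (\<Sum>i\<in>UNIV. norm (column i M) powr (-2)))"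
    by (simp add: trace_def sum.distrib sum_distrib_left)
  finally show ?thesis
    by (simp add: g_def B_def)
qed

theorem proposition3:
  fixes M :: "real^'p::finite^'n::finite" and \<gamma> :: real
  assumes "real CARD('n) - real CARD('p) - 1 > 0"
    and "\<gamma> \<ge> 0"
    and "invertible (transpose M ** M)"
  shows "laplacian (pi_MSVS2 \<gamma>) M =
    \<gamma> * (\<gamma> + real CARD('n) - 2 * real CARD('p))
      * (\<Sum>i\<in>UNIV. norm (column i M) powr (-2)) * pi_MSVS2 \<gamma> M"
proof -
  define e where "e = - (real CARD('n) - real CARD('p) - 1) / 2"
  have pi_eq: "pi_MSVS2 \<gamma> = (gram_density e \<gamma> :: real^'p^'n \<Rightarrow> real)"
    by (simp add: fun_eq_iff pi_MSVS2_def gram_density_def e_def)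
  have trace_coeff: "2 * e + real CARD('n) - real CARD('p) - 1 = 0"
    and norm_coeff: "\<gamma> + 2 - real CARD('n) - 4 * e = \<gamma> + real CARD('n) - 2 * real CARD('p)"
    by (simp_all add: e_def field_simps)
  show ?thesis
    using laplacian_gram_density[OF assms(3), of e \<gamma>] unfolding pi_eq trace_coeff norm_coeff
    by (simp add: mult_ac)
qed

end
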